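(* With $q$, $A=\{0=a_1<\cdots<a_m\}\subseteq\{0,\dots,q-1\}$, $F$ and $f$ as in the context, the weak limits $\nu_F=\lim_{k\to\infty}\nu_{F,k}$ and $\mu_f=\lim_{k\to\infty}\mu_{f,k}$ exist, and, viewed as probability measures on the torus $\mathbb{T}=\mathbb{R}/\mathbb{Z}$ (identified with $[0,1)$), they coincide: $\nu_F=\mu_f$.
   Context: $q\geqslant2$ is an integer, $A=\{a_1,\dots,a_m\}$ with $0=a_1<a_2<\cdots<a_m\leqslant q-1$, and $F\subseteq[0,1]$ is the set of reals with a base-$q$ expansion using only digits from $A$; $F$ is the attractor of the maps $S_i(x)=(x+a_i)/q$, $i=1,\dots,m$. For $E\subseteq[0,1]$ set $S(E)=\bigcup_{i=1}^m S_i(E)$ and let $E_k=S^k([0,1])$ ($k$-fold composition), a union of $m^k$ intervals of length $q^{-k}$. The standard mass distribution $\nu_F$ is the weak limit of the measures $\nu_{F,k}$, where $\nu_{F,0}$ is Lebesgue measure restricted to $[0,1]$ and $\nu_{F,k}=\frac{q}{m}\,\nu_{F,k-1}|_{E_k}$ for $k\geqslant1$ (i.e. $\nu_{F,k}$ is the uniform probability measure on $E_k$). The sequence $f=(f(n))_{n\geqslant0}$ is defined by $f(n)=1$ if every base-$q$ digit of $n$ lies in $A$ and $f(n)=0$ otherwise (equivalently, the fixed point starting with $1$ of the substitution $1\mapsto 1\,0^{a_2-a_1-1}1\cdots0^{a_m-a_{m-1}-1}1\,0^{q-1-a_m}$, $0\mapsto0^q$). The ghost measure $\mu_f$ is the weak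 limit of the pure point probability measures $\mu_{f,k}=m^{-k}\sum_{j=0}^{q^k-1}f(j)\,\delta_{j/q^k}$ on $\mathbb{T}$, where $\delta_x$ is the unit Dirac measure at $x$. *)

theory Defs
  imports "HOL-Probability.Probability"
begin

definition hutch :: "nat \<Rightarrow> nat set \<Rightarrow> real set \<Rightarrow> real set" where
  "hutch q A E = (\<Union>a\<in>A. (\<lambda>x. (x + real a) / real q) ` E)"

definition Ek :: "nat \<Rightarrow> nat set \<Rightarrow> nat \<Rightarrow> real set" where
  "Ek q A k = ((hutch q A) ^^ k) {0..1}"

fun nuF :: "nat \<Rightarrow> nat set \<Rightarrow> nat \<Rightarrow> real measure" where
  "nuF q A 0 = density lborel (indicator {0..1})"
| "nuF q A (Suc k) = density (nuF q A k)
      (\<lambda>x. ennreal (real q / real (card A)) * indicator (Ek q A (Suc k)) x)"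

text \<open>f(n) = 1 iff every base-q digit of n lies in A (leading zeros are harmless as 0 is in A).\<close>
definition fseq :: "nat \<Rightarrow> nat set \<Rightarrow> nat \<Rightarrow> real" where
  "fseq q A n = (if (\<forall>i. (n div q ^ i) mod q \<in> A) then 1 else 0)"

text \<open>mu_{f,k} = m^{-k} sum_{j<q^k} f(j) delta_{j/q^k}, as a measure on the Borel sets of the reals
  (all atoms lie in [0,1), the fundamental domain of the torus).\<close>
definition muf :: "nat \<Rightarrow> nat set \<Rightarrow> nat \<Rightarrow> real measure" where
  "muf q A k = distr
      (density (count_space {..<q ^ k}) (\<lambda>j. ennreal (fseq q A j / real (card A) ^ k)))
      borel (\<lambda>j. real j / real q ^ k)"

definition weak_limit :: "(nat \<Rightarrow> real measure) \<Rightarrow> real measure \<Rightarrow> bool" where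
  "weak_limit Ms M \<longleftrightarrow>
     (\<forall>g::real \<Rightarrow> real. continuous_on UNIV g \<and> bounded (range g) \<longrightarrow>
        (\<lambda>k. \<integral>x. g x \<partial>Ms k) \<longlonglongrightarrow> (\<integral>x. g x \<partial>M))"

text \<open>Weak convergence on the torus R/Z: test functions are the continuous 1-periodic functions.\<close>
definition torus_weak_limit :: "(nat \<Rightarrow> real measure) \<Rightarrow> real measure \<Rightarrow> bool" where
  "torus_weak_limit Ms M \<longleftrightarrow>
     (\<forall>g::real \<Rightarrow> real. continuous_on UNIV g \<and> (\<forall>x. g (x + 1) = g x) \<longrightarrow>
        (\<lambda>k. \<integral>x. g x \<partial>Ms k) \<longlonglongrightarrow> (\<integral>x. g x \<partial>M))"

end

theory Submission
  imports Defs "HOL-Library.Periodic_Fun"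
begin

(* Both integrals of a continuous g against the k-th measures are governed by the average
   m^-k * sum g(j/q^k) over the j < q^k whose base-q digits all lie in A: for the ghost
   measures this is exact, and for the mass distributions the error is at most the oscillation of g
   at scale q^-k, because E_k is the union of the q-adic intervals [j/q^k, (j+1)/q^k].  Passing from k
   to k+l replaces each point j/q^k by points of its own q-adic interval, so these averages form a
   Cauchy sequence.  All measures live on [0,1], hence Helly's selection theorem yields a limit
   distribution, and it is the weak limit of both sequences.  On the torus one pushes it forward
   by frac, which periodic test functions do not see. *)

definition oscillation_le :: "real \<Rightarrow> (real \<Rightarrow> real) \<Rightarrow> real \<Rightarrow> bool" where
  "oscillation_le \<delta> g e \<longleftrightarrow> (\<forall>x\<in>{0..1}. \<forall>y\<in>{0..1}. \<bar>x - y\<bar> \<le> \<delta> \<longrightarrow> \<bar>g x - g y\<bar> \<le> e)"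

lemma eventually_oscillation_le:
  fixes g :: "real \<Rightarrow> real" and b :: real
  assumes g: "continuous_on {0..1} g" and b: "b > 1" and e: "e > 0"
  shows "eventually (\<lambda>k. oscillation_le (1 / b ^ k) g e) sequentially"
proof -
  have "uniformly_continuous_on {0..1} g"
    using g by (rule compact_uniformly_continuous) simp
  then obtain d where d: "d > 0"
    and hd: "\<And>x y. x \<in> {0..1} \<Longrightarrow> y \<in> {0..1} \<Longrightarrow> dist y x < d \<Longrightarrow> dist (g y) (g x) < e"
    unfolding uniformly_continuous_on_def using e by metis
  obtain K where K: "(1 / b) ^ K < d"
    using real_arch_pow_inv[OF d, of "1 / b"] b by auto
  show ?thesis
    unfolding oscillation_le_def
  proof (rule eventually_sequentiallyI[of K], intro ballI impI)
    fix k x y assume k: "K \<le> k" and x: "x \<in> {0..1}" and y: "y \<in> {0..1}"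
      and xy: "\<bar>x - y\<bar> \<le> 1 / b ^ k"
    have "(1 / b) ^ k \<le> (1 / b) ^ K"
      using k b by (intro power_decreasing) auto
    then have "dist x y < d"
      using xy K by (simp add: dist_real_def power_one_over)
    then show "\<bar>g x - g y\<bar> \<le> e"
      using hd[OF y x] by (simp add: dist_real_def)
  qed
qed

section \<open>Convergence of measures\<close>

lemma tight_if_AE_interval:
  assumes "\<And>k. real_distribution (Ms k)" and "\<And>k. AE x in Ms k. x \<in> {a..b}" and "a \<le> b"
  shows "tight Ms"
proof -
  have measure_1: "measure (Ms k) {a - 1<..b} = 1" for k
  proof -
    interpret real_distribution "Ms k" by (fact assms(1))
    have "AE x in Ms k. x \<in> {a - 1<..b}"
      using assms(2)[of k] by eventually_elim auto
    then have "emeasure (Ms k) {a - 1<..b} = 1"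
      by (intro emeasure_eq_1_AE) auto
    then show ?thesis
      by (simp add: emeasure_eq_measure)
  qed
  then show ?thesis
    unfolding tight_def
  proof (intro conjI allI impI)
    fix e :: real assume "e > 0"
    then show "\<exists>a' b'. a' < b' \<and> (\<forall>k. 1 - e < measure (Ms k) {a'<..b'})"
      using \<open>a \<le> b\<close> measure_1 by (intro exI[of _ "a - 1"] exI[of _ b]) auto
  qed (rule assms(1))
qed

lemma weak_limit_if_tight_Cauchy:
  assumes tight: "tight Ms"
    and Cauchy: "\<And>g :: real \<Rightarrow> real. continuous_on UNIV g \<Longrightarrow> bounded (range g) \<Longrightarrow>
      Cauchy (\<lambda>k. \<integral>x. g x \<partial>Ms k)"
  shows "\<exists>M. real_distribution M \<and> weak_limit Ms M"
proof -
  \<comment> \<open>Helly selection gives a subsequential limit, and the Cauchy property forces the whole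
    sequence of integrals to follow it.\<close>
  obtain r M where r: "strict_mono r" and M: "real_distribution M"
    and conv: "weak_conv_m (Ms \<circ> id \<circ> r) M"
    using tight_imp_convergent_subsubsequence[OF tight, of id] by (auto simp: strict_mono_def)
  have "(\<lambda>k. \<integral>x. g x \<partial>Ms k) \<longlonglongrightarrow> (\<integral>x. g x \<partial>M)"
    if g: "continuous_on UNIV g" and gb: "bounded (range g)" for g :: "real \<Rightarrow> real"
  proof -
    obtain B where B: "\<And>x. norm (g x) \<le> B"
      using gb unfolding bounded_iff by blast
    have "(\<lambda>n. \<integral>x. g x \<partial>(Ms \<circ> id \<circ> r) n) \<longlonglongrightarrow> (\<integral>x. g x \<partial>M)"
      using tight g B unfolding tight_def
      by (intro weak_conv_imp_integral_bdd_continuous_conv[OF _ M conv])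
         (auto simp: continuous_on_eq_continuous_at)
    moreover obtain L where L: "(\<lambda>k. \<integral>x. g x \<partial>Ms k) \<longlonglongrightarrow> L"
      using Cauchy[OF g gb] by (auto simp: Cauchy_convergent_iff convergent_def)
    ultimately show ?thesis
      using LIMSEQ_subseq_LIMSEQ[OF L r] LIMSEQ_unique by (fastforce simp: o_def)
  qed
  then show ?thesis
    using M unfolding weak_limit_def by blast
qed

lemma weak_limit_emeasure_closed_eq_1:
  assumes lim: "weak_limit Ms M" and M: "real_distribution M"
    and C: "closed C" "C \<noteq> {}" and AE: "\<And>k. AE x in Ms k. x \<in> C"
  shows "emeasure M C = 1"
proof -
  interpret real_distribution M by (fact M)
  define h where "h x = min 1 (infdist x C)" for x
  have h_cont: "continuous_on UNIV h"
    unfolding h_def by (intro continuous_intros)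
  have h_bounded: "bounded (range h)"
    unfolding bounded_iff h_def by (intro exI[of _ 1]) (auto simp: infdist_nonneg)
  have "(\<lambda>k. \<integral>x. h x \<partial>Ms k) \<longlonglongrightarrow> (\<integral>x. h x \<partial>M)"
    using lim h_cont h_bounded unfolding weak_limit_def by blast
  moreover have "(\<integral>x. h x \<partial>Ms k) = 0" for k
    using AE[of k] by (intro integral_eq_zero_AE) (auto simp: h_def elim: AE_mp)
  ultimately have "(\<integral>x. h x \<partial>M) = 0"
    by (simp add: LIMSEQ_const_iff)
  moreover have "integrable M h"
    using h_cont by (intro integrable_const_bound[where B=1])
      (auto simp: h_def infdist_nonneg borel_measurable_continuous_onI)
  ultimately have "AE x in M. h x = 0"
    by (subst (asm) integral_nonneg_eq_0_iff_AE) (auto simp: h_def infdist_nonneg)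
  moreover have "h x = 0 \<Longrightarrow> x \<in> C" for x
    using in_closed_iff_infdist_zero[OF C] by (simp add: h_def min_def split: if_splits)
  ultimately have "AE x in M. x \<in> C"
    by (auto elim: AE_mp)
  moreover have "C \<in> sets M"
    using C(1) by (simp add: borel_closed)
  ultimately show ?thesis
    by (intro emeasure_eq_1_AE)
qed

lemma borel_measurable_frac [measurable]: "(frac :: real \<Rightarrow> real) \<in> borel_measurable borel"
  unfolding frac_def by measurable

lemma periodic_compose_frac:
  fixes g :: "real \<Rightarrow> 'a"
  assumes "\<And>x. g (x + 1) = g x"
  shows "g (frac x) = g x"
proof -
  interpret periodic_fun_simple' g by standard (fact assms)
  show ?thesis
    unfolding frac_def using minus_of_int[of x "\<lfloor>x\<rfloor>"] by simp
qed

lemma periodic_continuous_bounded: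
  fixes g :: "real \<Rightarrow> real"
  assumes g: "continuous_on UNIV g" and p: "\<And>x. g (x + 1) = g x"
  shows "bounded (range g)"
proof -
  have "g x \<in> g ` {0..1}" for x
  proof (rule image_eqI)
    show "g x = g (frac x)"
      using periodic_compose_frac[of g, OF p] by simp
    show "frac x \<in> {0..1}"
      using frac_ge_0[of x] frac_lt_1[of x] by simp
  qed
  then have "range g \<subseteq> g ` {0..1}"
    by blast
  moreover have "compact (g ` {0..1})"
    by (intro compact_continuous_image continuous_on_subset[OF g]) auto
  ultimately show ?thesis
    using compact_imp_bounded bounded_subset by blast
qed

lemma weak_limit_imp_torus_weak_limit_frac:
  assumes lim: "weak_limit Ms M" and M: "sets M = sets borel"
  shows "torus_weak_limit Ms (distr M borel frac)"
  unfolding torus_weak_limit_def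
proof (intro allI impI)
  fix g :: "real \<Rightarrow> real" assume "continuous_on UNIV g \<and> (\<forall>x. g (x + 1) = g x)"
  then have g: "continuous_on UNIV g" and p: "\<And>x. g (x + 1) = g x" by auto
  have frac_M: "frac \<in> borel_measurable M"
    using M by (simp cong: measurable_cong_sets)
  have "(\<integral>x. g x \<partial>distr M borel frac) = (\<integral>x. g (frac x) \<partial>M)"
    using g frac_M by (intro integral_distr) (auto intro: borel_measurable_continuous_onI)
  also have "\<dots> = (\<integral>x. g x \<partial>M)"
    using periodic_compose_frac[of g, OF p] by simp
  finally show "(\<lambda>k. \<integral>x. g x \<partial>Ms k) \<longlonglongrightarrow> (\<integral>x. g x \<partial>distr M borel frac)"
    using lim g periodic_continuous_bounded[OF g p] unfolding weak_limit_def by simp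
qed

lemma real_distribution_distr_frac:
  assumes "real_distribution M"
  shows "prob_space (distr M borel frac)" and "emeasure (distr M borel frac) {0..<1} = 1"
proof -
  interpret real_distribution M by (fact assms)
  have frac_M: "frac \<in> borel_measurable M"
    by (simp cong: measurable_cong_sets)
  show "prob_space (distr M borel frac)"
    using frac_M by (rule prob_space_distr)
  have "emeasure (distr M borel frac) {0..<1} = emeasure M (frac -` {0..<1} \<inter> space M)"
    using frac_M by (intro emeasure_distr) auto
  also have "frac -` {0..<1} \<inter> space M = space M"
    using frac_lt_1 frac_ge_0 by auto
  finally show "emeasure (distr M borel frac) {0..<1} = 1"
    using emeasure_space_1 by simp
qed

section \<open>Numbers whose digits lie in A\<close>

lemma mod_power_div_mod:
  fixes j q :: nat
  assumes "i < l" "q > 0"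
  shows "((j mod q ^ l) div q ^ i) mod q = (j div q ^ i) mod q"
proof -
  have ql: "q ^ l = q ^ i * q ^ (l - i)"
    using assms by (simp add: power_add[symmetric])
  have "j mod q ^ l = q ^ i * (j div q ^ i mod q ^ (l - i)) + j mod q ^ i"
    unfolding ql by (rule mod_mult2_eq)
  then have "(j mod q ^ l) div q ^ i = j div q ^ i mod q ^ (l - i)"
    using assms by simp
  moreover have "q dvd q ^ (l - i)"
    using assms by simp
  ultimately show ?thesis
    by (simp add: mod_mod_cancel)
qed

lemma mod_power_div_eq_0:
  fixes j q :: nat
  assumes "l \<le> i" "q > 0"
  shows "(j mod q ^ l) div q ^ i = 0"
proof -
  have "j mod q ^ l < q ^ l" using assms by simp
  also have "q ^ l \<le> q ^ i" using assms by (simp add: power_increasing)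
  finally show ?thesis by simp
qed

definition restricted_numbers :: "nat \<Rightarrow> nat set \<Rightarrow> nat \<Rightarrow> nat set" where
  "restricted_numbers q A k = {j. j < q ^ k \<and> (\<forall>i. (j div q ^ i) mod q \<in> A)}"

definition digit_mean :: "nat \<Rightarrow> nat set \<Rightarrow> nat \<Rightarrow> (real \<Rightarrow> real) \<Rightarrow> real" where
  "digit_mean q A k g = (\<Sum>j\<in>restricted_numbers q A k. g (real j / real q ^ k)) / real (card A) ^ k"

definition qadic_interval :: "nat \<Rightarrow> nat \<Rightarrow> nat \<Rightarrow> real set" where
  "qadic_interval q k j = {real j / real q ^ k .. (real j + 1) / real q ^ k}"

lemma finite_restricted_numbers: "finite (restricted_numbers q A k)"
  unfolding restricted_numbers_def by auto

lemma restricted_numbers_less: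
  assumes "j \<in> restricted_numbers q A k"
  shows "real j + 1 \<le> real q ^ k"
proof -
  have "j + 1 \<le> q ^ k"
    using assms by (simp add: restricted_numbers_def)
  then have "real (j + 1) \<le> real (q ^ k)"
    by (simp only: of_nat_le_iff)
  then show ?thesis
    by simp
qed

lemma fseq_eq_if:
  "j < q ^ k \<Longrightarrow> fseq q A j = (if j \<in> restricted_numbers q A k then 1 else 0)"
  unfolding fseq_def restricted_numbers_def by simp

lemma sum_if_restricted_numbers:
  "(\<Sum>j<q ^ k. if j \<in> restricted_numbers q A k then h j else 0)
    = (\<Sum>j\<in>restricted_numbers q A k. h j)"
proof -
  have "restricted_numbers q A k \<subseteq> {..<q ^ k}"
    unfolding restricted_numbers_def by auto
  then show ?thesis
    by (subst sum.inter_restrict[symmetric]) (simp_all add: Int_absorb1)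
qed

lemma hutch_mono: "E \<subseteq> E' \<Longrightarrow> hutch q A E \<subseteq> hutch q A E'"
  unfolding hutch_def by blast

lemma Ek_0: "Ek q A 0 = {0..1}"
  unfolding Ek_def by simp

lemma Ek_Suc: "Ek q A (Suc k) = hutch q A (Ek q A k)"
  unfolding Ek_def by simp

locale missing_digits =
  fixes q :: nat and A :: "nat set"
  assumes q_ge_2: "q \<ge> 2" and zero_in_A: "0 \<in> A" and A_less: "A \<subseteq> {..<q}"
begin

abbreviation R :: "nat \<Rightarrow> nat set" where "R \<equiv> restricted_numbers q A"

lemma q_pos: "q > 0"
  using q_ge_2 by simp

lemma card_A_pos: "card A > 0"
  using zero_in_A A_less finite_subset by (auto simp: card_gt_0_iff)

lemma restricted_numbers_add_iff:
  "j \<in> R (k + l) \<longleftrightarrow> j div q ^ l \<in> R k \<and> j mod q ^ l \<in> R l"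
proof -
  have digit_div: "(j div q ^ l) div q ^ i = j div q ^ (i + l)" for i
    by (metis div_mult2_eq power_add mult.commute)
  have "(\<forall>i. (j div q ^ i) mod q \<in> A) \<longleftrightarrow>
        (\<forall>i. ((j div q ^ l) div q ^ i) mod q \<in> A) \<and> (\<forall>i. ((j mod q ^ l) div q ^ i) mod q \<in> A)"
  proof safe
    fix i assume H: "\<forall>i. (j div q ^ i) mod q \<in> A"
    show "((j div q ^ l) div q ^ i) mod q \<in> A"
      using H digit_div by metis
    show "((j mod q ^ l) div q ^ i) mod q \<in> A"
      using H mod_power_div_mod[OF _ q_pos] mod_power_div_eq_0[OF _ q_pos] zero_in_A
      by (cases "i < l") auto
  next
    fix i assume H1: "\<forall>i. ((j div q ^ l) div q ^ i) mod q \<in> A"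
      and H2: "\<forall>i. ((j mod q ^ l) div q ^ i) mod q \<in> A"
    show "(j div q ^ i) mod q \<in> A"
    proof (cases "i < l")
      case True
      then show ?thesis using H2 mod_power_div_mod[OF _ q_pos] by metis
    next
      case False
      then have "i = (i - l) + l" by simp
      then show ?thesis using H1 digit_div by metis
    qed
  qed
  moreover have "j < q ^ (k + l) \<longleftrightarrow> j div q ^ l < q ^ k"
    using q_pos by (simp add: div_less_iff_less_mult power_add)
  ultimately show ?thesis
    using q_pos unfolding restricted_numbers_def by auto
qed

lemma bij_betw_restricted_numbers_add:
  "bij_betw (\<lambda>(a, r). a * q ^ l + r) (R k \<times> R l) (R (k + l))"
proof (rule bij_betw_byWitness[where f' = "\<lambda>j. (j div q ^ l, j mod q ^ l)"])
  have r_less: "r \<in> R l \<Longrightarrow> r < q ^ l" for r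
    unfolding restricted_numbers_def by auto
  show "\<forall>x\<in>R k \<times> R l. (\<lambda>j. (j div q ^ l, j mod q ^ l)) (case x of (a, r) \<Rightarrow> a * q ^ l + r) = x"
    using r_less q_pos by auto
  then show "(\<lambda>(a, r). a * q ^ l + r) ` (R k \<times> R l) \<subseteq> R (k + l)"
    by (auto simp: restricted_numbers_add_iff)
qed (auto simp: restricted_numbers_add_iff div_mult_mod_eq)

lemma sum_restricted_numbers_add:
  "(\<Sum>j\<in>R (k + l). h j) = (\<Sum>a\<in>R k. \<Sum>r\<in>R l. h (a * q ^ l + r))"
  by (simp add: sum.reindex_bij_betw[OF bij_betw_restricted_numbers_add, symmetric]
      sum.cartesian_product split_def)

lemma restricted_numbers_1: "R 1 = A"
proof safe
  fix j assume "j \<in> R 1"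
  then show "j \<in> A"
    unfolding restricted_numbers_def by (auto dest: spec[of _ 0])
next
  fix j assume j: "j \<in> A"
  then have "j < q" using A_less by auto
  have "j div q ^ i = 0" if "i > 0" for i
  proof -
    have "q ^ 1 \<le> q ^ i"
      using that q_pos by (intro power_increasing) auto
    then show ?thesis
      using \<open>j < q\<close> by simp
  qed
  then have "(j div q ^ i) mod q \<in> A" for i
    using j zero_in_A \<open>j < q\<close> by (cases "i = 0") auto
  with \<open>j < q\<close> show "j \<in> R 1"
    unfolding restricted_numbers_def by simp
qed

lemma card_restricted_numbers: "card (R k) = card A ^ k"
proof (induction k)
  case 0
  have "R 0 = {0}"
    using zero_in_A unfolding restricted_numbers_def by auto
  then show ?case by simp
next
  case (Suc k)
  have "card (R (k + 1)) = card (R k \<times> R 1)"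
    using bij_betw_restricted_numbers_add bij_betw_same_card by metis
  then show ?case
    unfolding restricted_numbers_1 using Suc by (simp add: card_cartesian_product)
qed

lemma qadic_interval_subset:
  assumes "j \<in> R k"
  shows "qadic_interval q k j \<subseteq> {0..1}" and "real j / real q ^ k \<in> {0..1}"
proof -
  have right: "(real j + 1) / real q ^ k \<le> 1"
    using restricted_numbers_less[OF assms] q_pos by simp
  moreover have left: "real j / real q ^ k \<le> (real j + 1) / real q ^ k"
    by (simp add: divide_right_mono)
  moreover have "0 \<le> real j / real q ^ k"
    by simp
  ultimately show "qadic_interval q k j \<subseteq> {0..1}" and "real j / real q ^ k \<in> {0..1}"
    by (simp_all add: qadic_interval_def)
qed

lemma oscillation_on_qadic_interval:
  assumes osc: "oscillation_le (1 / real q ^ k) g e"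
    and j: "j \<in> R k" and x: "x \<in> qadic_interval q k j"
  shows "\<bar>g x - g (real j / real q ^ k)\<bar> \<le> e"
proof -
  have "\<bar>x - real j / real q ^ k\<bar> \<le> 1 / real q ^ k"
    using x q_pos unfolding qadic_interval_def by (auto simp: add_divide_distrib)
  then show ?thesis
    using osc qadic_interval_subset[OF j] x unfolding oscillation_le_def by blast
qed

lemma refinement_in_qadic_interval:
  assumes "r \<in> R l"
  shows "real (a * q ^ l + r) / real q ^ (k + l) \<in> qadic_interval q k a"
proof -
  have Q: "real q ^ k > 0" "real q ^ l > 0"
    using q_pos by auto
  have "real (a * q ^ l + r) = (real a + real r / real q ^ l) * real q ^ l"
    using Q by (simp add: algebra_simps)
  then have "real (a * q ^ l + r) / real q ^ (k + l)
      = (real a + real r / real q ^ l) * real q ^ l / (real q ^ k * real q ^ l)"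
    by (simp only: power_add)
  also have "\<dots> = (real a + real r / real q ^ l) / real q ^ k"
    using Q by (intro nonzero_mult_divide_mult_cancel_right) simp
  finally have eq: "real (a * q ^ l + r) / real q ^ (k + l) = (real a + real r / real q ^ l) / real q ^ k" .
  have "real r \<le> real q ^ l"
    using restricted_numbers_less[OF assms] by linarith
  then have "real r / real q ^ l \<le> 1"
    using Q by simp
  then show ?thesis
    unfolding eq qadic_interval_def atLeastAtMost_iff using Q
    by (intro conjI divide_right_mono) auto
qed

lemma digit_mean_refine_close:
  assumes osc: "oscillation_le (1 / real q ^ k) g e"
  shows "\<bar>digit_mean q A (k + l) g - digit_mean q A k g\<bar> \<le> e"
proof -
  define m where "m = real (card A)"
  have m: "m > 0"
    using card_A_pos by (simp add: m_def)
  define x where "x a r = real (a * q ^ l + r) / real q ^ (k + l)" for a r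
  define y where "y a = real a / real q ^ k" for a
  have "digit_mean q A k g = (\<Sum>a\<in>R k. \<Sum>r\<in>R l. g (y a)) / m ^ (k + l)"
    using m by (simp add: digit_mean_def y_def m_def card_restricted_numbers power_add
        sum_distrib_left[symmetric])
  moreover have "digit_mean q A (k + l) g = (\<Sum>a\<in>R k. \<Sum>r\<in>R l. g (x a r)) / m ^ (k + l)"
    by (simp add: digit_mean_def sum_restricted_numbers_add x_def m_def)
  ultimately have "digit_mean q A (k + l) g - digit_mean q A k g
      = (\<Sum>a\<in>R k. \<Sum>r\<in>R l. g (x a r) - g (y a)) / m ^ (k + l)"
    by (simp add: sum_subtractf diff_divide_distrib)
  moreover have "\<bar>g (x a r) - g (y a)\<bar> \<le> e" if "a \<in> R k" "r \<in> R l" for a r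
    using oscillation_on_qadic_interval[OF osc that(1) refinement_in_qadic_interval[OF that(2)]]
    by (simp add: x_def y_def)
  then have "\<bar>\<Sum>a\<in>R k. \<Sum>r\<in>R l. g (x a r) - g (y a)\<bar> \<le> (\<Sum>a\<in>R k. \<Sum>r\<in>R l. e)"
    by (intro order_trans[OF sum_abs] sum_mono order_trans[OF sum_abs]) auto
  ultimately have "\<bar>digit_mean q A (k + l) g - digit_mean q A k g\<bar> \<le> (\<Sum>a\<in>R k. \<Sum>r\<in>R l. e) / m ^ (k + l)"
    using m by (simp add: abs_divide divide_right_mono)
  also have "\<dots> = e"
    using m by (simp add: m_def card_restricted_numbers power_add)
  finally show ?thesis .
qed

lemma Cauchy_digit_mean:
  assumes g: "continuous_on UNIV g"
  shows "Cauchy (\<lambda>k. digit_mean q A k g)"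
proof (rule CauchyI)
  fix e :: real assume "e > 0"
  then obtain K where K: "\<And>k. k \<ge> K \<Longrightarrow> oscillation_le (1 / real q ^ k) g (e / 3)"
    using eventually_oscillation_le[OF continuous_on_subset[OF g], of "real q" "e / 3"] q_ge_2
    unfolding eventually_sequentially by auto
  have close: "\<bar>digit_mean q A n g - digit_mean q A K g\<bar> \<le> e / 3" if "n \<ge> K" for n
    using digit_mean_refine_close[OF K[OF order_refl], of "n - K"] that by simp
  show "\<exists>M. \<forall>m\<ge>M. \<forall>n\<ge>M. norm (digit_mean q A m g - digit_mean q A n g) < e"
  proof (intro exI allI impI)
    fix m n assume "K \<le> m" "K \<le> n"
    then show "norm (digit_mean q A m g - digit_mean q A n g) < e"
      using close[of m] close[of n] \<open>e > 0\<close> unfolding real_norm_def by arith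
  qed
qed

section \<open>The ghost measures\<close>

lemma integral_muf:
  assumes "g \<in> borel_measurable borel"
  shows "(\<integral>x. g x \<partial>muf q A k) = digit_mean q A k g"
proof -
  have "(\<integral>x. g x \<partial>muf q A k)
      = (\<Sum>j<q ^ k. fseq q A j * (g (real j / real q ^ k) / real (card A) ^ k))"
    using assms unfolding muf_def
    by (simp add: integral_distr integral_density lebesgue_integral_count_space_finite fseq_def
        sum_divide_distrib)
  also have "\<dots> = (\<Sum>j<q ^ k. if j \<in> R k then g (real j / real q ^ k) / real (card A) ^ k else 0)"
    by (intro sum.cong) (simp_all add: fseq_eq_if)
  also have "\<dots> = digit_mean q A k g"
    unfolding digit_mean_def sum_if_restricted_numbers by (simp add: sum_divide_distrib)
  finally show ?thesis .
qed

lemma prob_space_muf: "prob_space (muf q A k)"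
proof
  have "emeasure (muf q A k) (space (muf q A k))
      = (\<Sum>j<q ^ k. ennreal (fseq q A j / real (card A) ^ k))"
    unfolding muf_def
    by (simp add: emeasure_distr emeasure_density nn_integral_count_space_finite)
  also have "\<dots> = ennreal (\<Sum>j<q ^ k. fseq q A j * (1 / real (card A) ^ k))"
    by (subst sum_ennreal) (auto simp: fseq_def)
  also have "(\<Sum>j<q ^ k. fseq q A j * (1 / real (card A) ^ k))
      = (\<Sum>j<q ^ k. if j \<in> R k then 1 / real (card A) ^ k else 0)"
    by (intro sum.cong) (simp_all add: fseq_eq_if)
  also have "\<dots> = 1"
    unfolding sum_if_restricted_numbers using card_A_pos by (simp add: card_restricted_numbers)
  finally show "emeasure (muf q A k) (space (muf q A k)) = 1"
    by simp
qed

lemma real_distribution_muf: "real_distribution (muf q A k)"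
  using prob_space_muf by (simp add: real_distribution_def real_distribution_axioms_def muf_def)

lemma AE_muf_unit_interval: "AE x in muf q A k. x \<in> {0..1}"
  unfolding muf_def
proof (subst AE_distr_iff)
  show "AE j in density (count_space {..<q ^ k}) (\<lambda>j. ennreal (fseq q A j / real (card A) ^ k)).
        real j / real q ^ k \<in> {0..1}"
  proof (rule AE_I2)
    fix j assume "j \<in> space (density (count_space {..<q ^ k}) (\<lambda>j. ennreal (fseq q A j / real (card A) ^ k)))"
    then have "real j < real q ^ k"
      by (metis lessThan_iff of_nat_less_iff of_nat_power space_count_space space_density)
    then show "real j / real q ^ k \<in> {0..1}"
      using q_pos by simp
  qed
qed auto

lemma ex_weak_limit_muf: "\<exists>M. real_distribution M \<and> weak_limit (muf q A) M"
proof (rule weak_limit_if_tight_Cauchy)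
  show "tight (muf q A)"
    using real_distribution_muf AE_muf_unit_interval by (rule tight_if_AE_interval) simp
  show "Cauchy (\<lambda>k. \<integral>x. g x \<partial>muf q A k)" if "continuous_on UNIV g" for g :: "real \<Rightarrow> real"
    using Cauchy_digit_mean[OF that] integral_muf[OF borel_measurable_continuous_onI[OF that]]
    by simp
qed

section \<open>The mass distributions\<close>

lemma hutch_unit_interval: "hutch q A {0..1} \<subseteq> {0..1}"
proof
  fix y assume "y \<in> hutch q A {0..1}"
  then obtain a x where a: "a \<in> A" and x: "x \<in> {0..1::real}" and y: "y = (x + real a) / real q"
    unfolding hutch_def by blast
  have "real a + 1 \<le> real q"
    using a A_less by (auto simp flip: of_nat_Suc)
  then show "y \<in> {0..1}"
    using x y q_pos by auto
qed

lemma Ek_Suc_subset: "Ek q A (Suc k) \<subseteq> Ek q A k"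
proof (induction k)
  case 0
  then show ?case using hutch_unit_interval by (simp add: Ek_Suc Ek_0)
next
  case (Suc k)
  then show ?case
    unfolding Ek_Suc[of q A "Suc k"] Ek_Suc[of q A k] by (rule hutch_mono)
qed

lemma image_qadic_interval:
  "(\<lambda>x. (x + real a) / real q) ` qadic_interval q k j = qadic_interval q (Suc k) (a * q ^ k + j)"
proof -
  have Q: "real q > 0" "real q ^ k > 0"
    using q_pos by auto
  have "(\<lambda>x. (x + real a) / real q) ` qadic_interval q k j
      = (\<lambda>x. x / real q + real a / real q) ` qadic_interval q k j"
    by (simp add: add_divide_distrib)
  also have "\<dots> = {real j / real q ^ k / real q + real a / real q
      .. (real j + 1) / real q ^ k / real q + real a / real q}"
    unfolding qadic_interval_def using Q
    by (subst image_affinity_atLeastAtMost_div) (auto simp: divide_right_mono)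
  also have "\<dots> = qadic_interval q (Suc k) (a * q ^ k + j)"
    unfolding qadic_interval_def using Q by (simp add: field_simps)
  finally show ?thesis .
qed

lemma Ek_eq_Union_qadic_interval: "Ek q A k = (\<Union>j\<in>R k. qadic_interval q k j)"
proof (induction k)
  case 0
  have "R 0 = {0}"
    using zero_in_A unfolding restricted_numbers_def by auto
  then show ?case
    by (simp add: Ek_0 qadic_interval_def)
next
  case (Suc k)
  have "R (Suc k) = (\<lambda>(a, j). a * q ^ k + j) ` (A \<times> R k)"
    using bij_betw_imp_surj_on[OF bij_betw_restricted_numbers_add[of k 1]]
    unfolding restricted_numbers_1 by simp
  then have "(\<Union>j\<in>R (Suc k). qadic_interval q (Suc k) j)
      = (\<Union>a\<in>A. \<Union>j\<in>R k. qadic_interval q (Suc k) (a * q ^ k + j))"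
    by auto
  also have "\<dots> = Ek q A (Suc k)"
    unfolding Ek_Suc Suc hutch_def by (simp add: image_UN image_qadic_interval)
  finally show ?case ..
qed

lemma compact_Ek: "compact (Ek q A k)"
proof -
  have "Ek q A k \<subseteq> {0..1}"
    by (induction k) (use Ek_Suc_subset in \<open>auto simp: Ek_0\<close>)
  moreover have "closed (Ek q A k)"
    unfolding Ek_eq_Union_qadic_interval qadic_interval_def
    by (intro closed_UN finite_restricted_numbers) auto
  ultimately show ?thesis
    using bounded_subset compact_eq_bounded_closed by blast
qed

lemma sets_borel_Ek [measurable]: "Ek q A k \<in> sets borel"
  using compact_Ek by (simp add: borel_compact)

lemma nuF_eq_density:
  "nuF q A k = density lborel (\<lambda>x. ennreal ((real q / real (card A)) ^ k * indicator (Ek q A k) x))"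
proof (induction k)
  case 0
  then show ?case by (simp add: Ek_0 ennreal_indicator)
next
  case (Suc k)
  have density_step: "ennreal ((real q / real (card A)) ^ k * indicator (Ek q A k) x)
      * (ennreal (real q / real (card A)) * indicator (Ek q A (Suc k)) x)
    = ennreal ((real q / real (card A)) ^ Suc k * indicator (Ek q A (Suc k)) x)" for x
  proof (cases "x \<in> Ek q A (Suc k)")
    case True
    then have "x \<in> Ek q A k"
      using Ek_Suc_subset by blast
    with True show ?thesis
      by (simp add: ennreal_mult[symmetric] mult.commute)
  qed simp
  have "nuF q A (Suc k) = density lborel (\<lambda>x.
      ennreal ((real q / real (card A)) ^ k * indicator (Ek q A k) x)
      * (ennreal (real q / real (card A)) * indicator (Ek q A (Suc k)) x))"
    by (simp add: Suc density_density_eq)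
  also have "\<dots> = density lborel (\<lambda>x.
      ennreal ((real q / real (card A)) ^ Suc k * indicator (Ek q A (Suc k)) x))"
    by (simp only: density_step)
  finally show ?case .
qed

lemma qadic_interval_Int_subset:
  assumes "i \<noteq> i'"
  shows "qadic_interval q k i \<inter> qadic_interval q k i' \<subseteq> {real i / real q ^ k, real i' / real q ^ k}"
proof -
  have Q: "real q ^ k > 0"
    using q_pos by simp
  have "(real i + 1) / real q ^ k \<le> real i' / real q ^ k \<or> (real i' + 1) / real q ^ k \<le> real i / real q ^ k"
    using assms Q by (cases "i < i'") (auto intro!: divide_right_mono)
  then show ?thesis
    unfolding qadic_interval_def by auto
qed

lemma integral_nuF:
  assumes g: "continuous_on UNIV g"
  shows "(\<integral>x. g x \<partial>nuF q A k)
    = (real q / real (card A)) ^ k * (\<Sum>j\<in>R k. integral (qadic_interval q k j) g)"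
proof -
  have "(\<integral>x. g x \<partial>nuF q A k)
      = (\<integral>x. ((real q / real (card A)) ^ k * indicator (Ek q A k) x) *\<^sub>R g x \<partial>lborel)"
    unfolding nuF_eq_density using g
    by (intro integral_density) (auto intro: borel_measurable_continuous_onI)
  also have "\<dots> = (real q / real (card A)) ^ k * (LINT x:Ek q A k|lborel. g x)"
    unfolding set_lebesgue_integral_def by (simp add: mult.assoc)
  also have "(LINT x:Ek q A k|lborel. g x) = integral (Ek q A k) g"
    using borel_integrable_compact[OF compact_Ek continuous_on_subset[OF g]]
    by (intro set_borel_integral_eq_integral(2)) (simp add: set_integrable_def)
  also have "\<dots> = (\<Sum>j\<in>R k. integral (qadic_interval q k j) g)"
    unfolding Ek_eq_Union_qadic_interval
  proof (intro integral_unique has_integral_UN finite_restricted_numbers)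
    show "(g has_integral integral (qadic_interval q k j) g) (qadic_interval q k j)" for j
      unfolding qadic_interval_def using g
      by (intro integrable_integral integrable_continuous_interval) (auto intro: continuous_on_subset)
    show "pairwise (\<lambda>i i'. negligible (qadic_interval q k i \<inter> qadic_interval q k i')) (R k)"
      unfolding pairwise_def
      by (auto intro: negligible_subset[OF negligible_finite qadic_interval_Int_subset])
  qed
  finally show ?thesis .
qed

lemma qadic_interval_integral_close:
  assumes g: "continuous_on UNIV g" and osc: "oscillation_le (1 / real q ^ k) g e"
    and j: "j \<in> R k"
  shows "\<bar>integral (qadic_interval q k j) g - g (real j / real q ^ k) / real q ^ k\<bar> \<le> e / real q ^ k"
proof -
  define Q where "Q = real q ^ k"
  define y where "y = real j / Q"
  have Q: "Q > 0"
    using q_pos by (simp add: Q_def)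
  have I: "qadic_interval q k j = {y .. (real j + 1) / Q}"
    unfolding qadic_interval_def Q_def y_def ..
  have le: "y \<le> (real j + 1) / Q"
    using Q by (simp add: y_def divide_right_mono)
  have len: "(real j + 1) / Q - y = 1 / Q"
    by (simp add: y_def add_divide_distrib)
  have "integral (qadic_interval q k j) g - g y / Q = integral (qadic_interval q k j) (\<lambda>x. g x - g y)"
    unfolding I using g le len
    by (subst integral_diff) (auto intro: integrable_continuous_interval continuous_on_subset)
  also have "\<bar>\<dots>\<bar> \<le> e * ((real j + 1) / Q - y)"
    unfolding real_norm_def[symmetric] I
  proof (rule integral_bound[OF le])
    show "continuous_on {y..(real j + 1) / Q} (\<lambda>x. g x - g y)"
      by (intro continuous_intros continuous_on_subset[OF g]) auto
    show "norm (g t - g y) \<le> e" if "t \<in> {y..(real j + 1) / Q}" for t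
      using oscillation_on_qadic_interval[OF osc j] that unfolding I by (simp add: y_def Q_def)
  qed
  also have "\<dots> = e / Q"
    using len by simp
  finally show ?thesis
    by (simp add: Q_def y_def)
qed

lemma integral_nuF_close:
  assumes g: "continuous_on UNIV g" and osc: "oscillation_le (1 / real q ^ k) g e"
  shows "\<bar>(\<integral>x. g x \<partial>nuF q A k) - digit_mean q A k g\<bar> \<le> e"
proof -
  define c where "c = (real q / real (card A)) ^ k"
  define Q where "Q = real q ^ k"
  define I where "I j = integral (qadic_interval q k j) g" for j
  define y where "y j = real j / Q" for j
  have pos: "c > 0" "Q > 0" "real (card A) ^ k > 0"
    using q_pos card_A_pos by (auto simp: c_def Q_def)
  have "digit_mean q A k g = c * (\<Sum>j\<in>R k. g (y j) / Q)"
    using pos unfolding digit_mean_def c_def Q_def y_def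
    by (simp add: sum_divide_distrib[symmetric] power_divide)
  then have "(\<integral>x. g x \<partial>nuF q A k) - digit_mean q A k g = c * (\<Sum>j\<in>R k. I j - g (y j) / Q)"
    by (simp add: integral_nuF[OF g] c_def I_def sum_subtractf right_diff_distrib)
  also have "\<bar>\<dots>\<bar> \<le> c * (\<Sum>j\<in>R k. e / Q)"
  proof -
    have "\<bar>\<Sum>j\<in>R k. I j - g (y j) / Q\<bar> \<le> (\<Sum>j\<in>R k. e / Q)"
      using qadic_interval_integral_close[OF g osc] unfolding I_def y_def Q_def
      by (intro order_trans[OF sum_abs] sum_mono) auto
    then show ?thesis
      unfolding abs_mult abs_of_pos[OF pos(1)] using pos(1) by (intro mult_left_mono) auto
  qed
  also have "\<dots> = e"
    using pos card_A_pos by (simp add: c_def Q_def card_restricted_numbers power_divide)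
  finally show ?thesis .
qed

lemma tendsto_integral_nuF_minus_digit_mean:
  assumes g: "continuous_on UNIV g"
  shows "(\<lambda>k. (\<integral>x. g x \<partial>nuF q A k) - digit_mean q A k g) \<longlonglongrightarrow> 0"
proof (rule tendstoI)
  fix e :: real assume "e > 0"
  then have "eventually (\<lambda>k. oscillation_le (1 / real q ^ k) g (e / 2)) sequentially"
    using eventually_oscillation_le[OF continuous_on_subset[OF g], of "real q" "e / 2"] q_ge_2
    by auto
  then show "eventually (\<lambda>k. dist ((\<integral>x. g x \<partial>nuF q A k) - digit_mean q A k g) 0 < e) sequentially"
    by eventually_elim (use integral_nuF_close[OF g] \<open>e > 0\<close> in \<open>force simp: dist_real_def\<close>)
qed

lemma weak_limit_nuF:
  assumes "weak_limit (muf q A) M"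
  shows "weak_limit (nuF q A) M"
  unfolding weak_limit_def
proof (intro allI impI)
  fix g :: "real \<Rightarrow> real" assume "continuous_on UNIV g \<and> bounded (range g)"
  then have g: "continuous_on UNIV g" and "bounded (range g)" by auto
  then have "(\<lambda>k. \<integral>x. g x \<partial>muf q A k) \<longlonglongrightarrow> (\<integral>x. g x \<partial>M)"
    using assms unfolding weak_limit_def by blast
  then have "(\<lambda>k. digit_mean q A k g) \<longlonglongrightarrow> (\<integral>x. g x \<partial>M)"
    using integral_muf[OF borel_measurable_continuous_onI[OF g]] by simp
  from tendsto_add[OF tendsto_integral_nuF_minus_digit_mean[OF g] this]
  show "(\<lambda>k. \<integral>x. g x \<partial>nuF q A k) \<longlonglongrightarrow> (\<integral>x. g x \<partial>M)"
    by simp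
qed

end

theorem theorem2:
  fixes q :: nat and A :: "nat set"
  assumes "q \<ge> 2" and "0 \<in> A" and "A \<subseteq> {..<q}"
  shows "\<exists>\<nu> \<mu>. prob_space \<nu> \<and> sets \<nu> = sets borel \<and> \<nu> {0..1} = 1
           \<and> weak_limit (nuF q A) \<nu>
           \<and> prob_space \<mu> \<and> sets \<mu> = sets borel \<and> \<mu> {0..<1} = 1
           \<and> torus_weak_limit (muf q A) \<mu>
           \<and> distr \<nu> borel frac = \<mu>"
proof -
  interpret missing_digits q A
    using assms by unfold_locales
  obtain M where M: "real_distribution M" and lim: "weak_limit (muf q A) M"
    using ex_weak_limit_muf by blast
  interpret real_distribution M
    by (fact M)
  have "emeasure M {0..1} = 1"
    using weak_limit_emeasure_closed_eq_1[OF lim M] AE_muf_unit_interval by simp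
  then show ?thesis
    using prob_space_axioms weak_limit_nuF[OF lim] real_distribution_distr_frac[OF M]
      weak_limit_imp_torus_weak_limit_frac[OF lim]
    by (intro exI[of _ M] exI[of _ "distr M borel frac"]) auto
qed

end
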